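(* Let $\Pi$ be a set of $n\ge2$ processes and let $\mathcal{G}^1,\mathcal{G}^2,\dots$ be an infinite sequence of simple directed graphs on $\Pi$ such that every $\mathcal{G}^r$, $r>0$, contains at most one root component. Then (i) there is at least one process $p$ such that $d_1(p,q)$ is finite for all $q\in\Pi$, and in fact $d_1(p,q)\le n(n-2)+1$ for all $q\in\Pi$. Conversely, (ii) for $n>2$ there exist sequences of graphs, each containing exactly one root component, such that no process $p$ is causally influenced by all other processes, i.e., there is no $p$ with $d_1(q,p)<\infty$ for all $q\in\Pi$.
   Context: $\mathcal{G}^r$ is the round-$r$ communication graph. A root component of $\mathcal{G}^r$ is a strongly connected component $\mathcal{R}$ of $\mathcal{G}^r$ such that there is no edge $(q\to p)\in\mathcal{G}^r$ with $p\in\mathcal{R}$, $q\notin\mathcal{R}$. Process $p$ causally influences $q$ in round $t$ if $q=p$ or $(p\to q)\in\mathcal{G}^t$. A causal chain of length $k\ge1$ from $p$ in round $t$ to $q$ is a sequence $p=p_0,\dots,p_k=q$ with $p_i$ causally influencing $p_{i+1}$ in round $t+i$ for $0\le i<k$; the causal distance $d_t(p,q)$ is the minimum length of such a chain, and $\infty$ if none exists. *)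

theory Defs
  imports Main "HOL-Library.Extended_Nat" "HOL-Library.Cardinality"
begin

text \<open>Processes are the elements of a finite type 'a (the set \<Pi> = UNIV).
  A directed graph on \<Pi> is an edge relation E :: ('a \<times> 'a) set.\<close>

definition simple_digraph :: "('a \<times> 'a) set \<Rightarrow> bool" where
  "simple_digraph E \<longleftrightarrow> (\<forall>p. (p, p) \<notin> E)"

definition strongly_connected_component :: "('a \<times> 'a) set \<Rightarrow> 'a set \<Rightarrow> bool" where
  "strongly_connected_component E R \<longleftrightarrow>
     R \<noteq> {} \<and>
     (\<forall>p\<in>R. \<forall>q\<in>R. (p, q) \<in> E\<^sup>*) \<and>
     (\<forall>p\<in>R. \<forall>q. (p, q) \<in> E\<^sup>* \<and> (q, p) \<in> E\<^sup>* \<longrightarrow> q \<in> R)"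

definition root_component :: "('a \<times> 'a) set \<Rightarrow> 'a set \<Rightarrow> bool" where
  "root_component E R \<longleftrightarrow>
     strongly_connected_component E R \<and>
     \<not> (\<exists>p q. (q, p) \<in> E \<and> p \<in> R \<and> q \<notin> R)"

definition causally_influences :: "(nat \<Rightarrow> ('a \<times> 'a) set) \<Rightarrow> nat \<Rightarrow> 'a \<Rightarrow> 'a \<Rightarrow> bool" where
  "causally_influences G t p q \<longleftrightarrow> q = p \<or> (p, q) \<in> G t"

definition causal_chain :: "(nat \<Rightarrow> ('a \<times> 'a) set) \<Rightarrow> nat \<Rightarrow> nat \<Rightarrow> 'a \<Rightarrow> 'a \<Rightarrow> bool" where
  "causal_chain G t k p q \<longleftrightarrow> 1 \<le> k \<and>
     (\<exists>ps :: nat \<Rightarrow> 'a. ps 0 = p \<and> ps k = q \<and>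
        (\<forall>i<k. causally_influences G (t + i) (ps i) (ps (Suc i))))"

definition causal_distance :: "(nat \<Rightarrow> ('a \<times> 'a) set) \<Rightarrow> nat \<Rightarrow> 'a \<Rightarrow> 'a \<Rightarrow> enat" where
  "causal_distance G t p q =
     (if \<exists>k. causal_chain G t k p q then enat (LEAST k. causal_chain G t k p q) else \<infinity>)"

end

theory Submission
  imports Defs "HOL-Library.FuncSet"
begin

text \<open>If a graph has a single root component, some process of it reaches every process.
  Follow, round by round, the set of processes reached by causal chains from a fixed process p:
  in every round whose graph is rooted at p this set either is already everything or, since a
  path from p must leave it, gains a new member. Among n(n-2)+1 rounds some process is the
  chosen source of at least n-1 of them (pigeonhole), and n-1 strict increases from the
  singleton reach all n processes.

  For the converse, the out-star centred at a process a has {a} as its unique root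
  component, but a process other than a is never influenced by anyone else.\<close>

lemma rtrancl_exits_set:
  assumes "(x, y) \<in> E\<^sup>*" "x \<in> F" "y \<notin> F"
  shows "\<exists>u v. u \<in> F \<and> v \<notin> F \<and> (u, v) \<in> E"
  using assms by (induction rule: rtrancl_induct) blast+

lemma ex_root_component_reaching:
  fixes E :: "('a::finite \<times> 'a) set"
  shows "\<exists>R. root_component E R \<and> (\<exists>a\<in>R. (a, q) \<in> E\<^sup>*)"
proof -
  define ancestors where "ancestors b = {c. (c, b) \<in> E\<^sup>*}" for b
  \<comment> \<open>An ancestor of q with the fewest ancestors lies in a root component.\<close>
  obtain a where aq: "(a, q) \<in> E\<^sup>*"
    and a_min: "\<And>b. (b, q) \<in> E\<^sup>* \<Longrightarrow> card (ancestors a) \<le> card (ancestors b)"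
    using ex_has_least_nat[of "\<lambda>b. (b, q) \<in> E\<^sup>*" q "\<lambda>b. card (ancestors b)"] by auto
  define R where "R = {b. (b, a) \<in> E\<^sup>* \<and> (a, b) \<in> E\<^sup>*}"
  have "strongly_connected_component E R"
    unfolding strongly_connected_component_def R_def by (auto intro: rtrancl_trans)
  moreover have "c \<in> R" if cb: "(c, b) \<in> E" and "b \<in> R" for b c
  proof -
    have ca: "(c, a) \<in> E\<^sup>*" using that unfolding R_def by auto
    then have "ancestors c \<subseteq> ancestors a"
      unfolding ancestors_def by (auto intro: rtrancl_trans)
    moreover have "card (ancestors a) \<le> card (ancestors c)"
      using a_min rtrancl_trans[OF ca aq] .
    ultimately have "ancestors c = ancestors a" by (simp add: card_seteq)
    then have "(a, c) \<in> E\<^sup>*" unfolding ancestors_def by auto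
    with ca show ?thesis unfolding R_def by auto
  qed
  moreover have "a \<in> R" unfolding R_def by auto
  ultimately show ?thesis using aq unfolding root_component_def by blast
qed

lemma unique_root_component_imp_source:
  fixes E :: "('a::finite \<times> 'a) set"
  assumes "\<And>R1 R2. root_component E R1 \<Longrightarrow> root_component E R2 \<Longrightarrow> R1 = R2"
  shows "\<exists>x. \<forall>q. (x, q) \<in> E\<^sup>*"
proof -
  obtain R0 x where R0: "root_component E R0" and "x \<in> R0"
    using ex_root_component_reaching[of E undefined] by blast
  have "(x, q) \<in> E\<^sup>*" for q
  proof -
    obtain R a where "root_component E R" "a \<in> R" "(a, q) \<in> E\<^sup>*"
      using ex_root_component_reaching[of E q] by blast
    moreover from this R0 assms have "R = R0" by blast
    ultimately have "(x, a) \<in> E\<^sup>*" using \<open>x \<in> R0\<close> R0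
      unfolding root_component_def strongly_connected_component_def by blast
    then show ?thesis using \<open>(a, q) \<in> E\<^sup>*\<close> by (rule rtrancl_trans)
  qed
  then show ?thesis by blast
qed

fun influence_set :: "(nat \<Rightarrow> ('a \<times> 'a) set) \<Rightarrow> nat \<Rightarrow> 'a \<Rightarrow> nat \<Rightarrow> 'a set" where
  "influence_set G t p 0 = {p}"
| "influence_set G t p (Suc k) =
     {v. \<exists>u\<in>influence_set G t p k. causally_influences G (t + k) u v}"

lemma influence_set_subset_Suc: "influence_set G t p k \<subseteq> influence_set G t p (Suc k)"
  by (auto simp: causally_influences_def)

lemma self_in_influence_set: "p \<in> influence_set G t p k"
  by (induction k) (auto simp: causally_influences_def)

lemma causal_path_if_in_influence_set:
  "q \<in> influence_set G t p k \<Longrightarrow>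
     \<exists>ps. ps 0 = p \<and> ps k = q \<and> (\<forall>i<k. causally_influences G (t + i) (ps i) (ps (Suc i)))"
proof (induction k arbitrary: q)
  case 0
  then show ?case by auto
next
  case (Suc k)
  then obtain u where "u \<in> influence_set G t p k" and u: "causally_influences G (t + k) u q"
    by auto
  then obtain ps where ps: "ps 0 = p" "ps k = u"
    "\<forall>i<k. causally_influences G (t + i) (ps i) (ps (Suc i))"
    using Suc.IH by blast
  have "\<forall>i<Suc k. causally_influences G (t + i) ((ps(Suc k := q)) i) ((ps(Suc k := q)) (Suc i))"
    using ps u by (auto simp: less_Suc_eq)
  with ps show ?case by (intro exI[of _ "ps(Suc k := q)"]) auto
qed

lemma causal_distance_le_if_causal_chain:
  "causal_chain G t k p q \<Longrightarrow> causal_distance G t p q \<le> enat k"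
  unfolding causal_distance_def by (auto intro: Least_le)

lemma causal_distance_le_if_in_influence_set:
  assumes "q \<in> influence_set G t p k" "k \<ge> 1"
  shows "causal_distance G t p q \<le> enat k"
  using causal_path_if_in_influence_set[OF assms(1)] assms(2)
  by (intro causal_distance_le_if_causal_chain) (auto simp: causal_chain_def)

lemma card_influence_set_ge:
  fixes G :: "nat \<Rightarrow> ('a::finite \<times> 'a) set"
  assumes "\<forall>i<k. \<forall>q. (x i, q) \<in> (G (t + i))\<^sup>*"
  shows "min CARD('a) (1 + card (x -` {p} \<inter> {..<k})) \<le> card (influence_set G t p k)"
  using assms
proof (induction k)
  case 0
  then show ?case by simp
next
  case (Suc k)
  let ?S = "influence_set G t p"
  have IH: "min CARD('a) (1 + card (x -` {p} \<inter> {..<k})) \<le> card (?S k)"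
    using Suc by simp
  have mono: "card (?S k) \<le> card (?S (Suc k))"
    by (rule card_mono[OF finite influence_set_subset_Suc])
  show ?case
  proof (cases "x k = p")
    case False
    then have "x -` {p} \<inter> {..<Suc k} = x -` {p} \<inter> {..<k}"
      by (auto simp: less_Suc_eq)
    with IH mono show ?thesis by simp
  next
    case True
    then have fibre: "x -` {p} \<inter> {..<Suc k} = insert k (x -` {p} \<inter> {..<k})"
      by (auto simp: less_Suc_eq)
    show ?thesis
    proof (cases "?S k = UNIV")
      case True
      then have "?S (Suc k) = UNIV" using influence_set_subset_Suc[of G t p k] by auto
      then show ?thesis by simp
    next
      case False
      then obtain q where "q \<notin> ?S k" by auto
      moreover have "(p, q) \<in> (G (t + k))\<^sup>*" using Suc.prems \<open>x k = p\<close> by auto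
      ultimately obtain u v where "u \<in> ?S k" "v \<notin> ?S k" "(u, v) \<in> G (t + k)"
        using rtrancl_exits_set[of p q "G (t + k)" "?S k"] self_in_influence_set[of p G t k] by blast
      then have "?S k \<subset> ?S (Suc k)"
        using influence_set_subset_Suc[of G t p k] by (auto simp: causally_influences_def)
      then have "card (?S k) < card (?S (Suc k))" by (simp add: psubset_card_mono)
      moreover have "card (?S (Suc k)) \<le> CARD('a)" by (rule card_mono) auto
      moreover have "card (insert k (x -` {p} \<inter> {..<k})) = Suc (card (x -` {p} \<inter> {..<k}))"
        by simp
      ultimately show ?thesis using IH unfolding fibre by linarith
    qed
  qed
qed

theorem ex_process_influencing_all:
  fixes G :: "nat \<Rightarrow> ('a::finite \<times> 'a) set"
  assumes unique_root: "\<And>r R1 R2. r \<ge> t \<Longrightarrow> root_component (G r) R1 \<Longrightarrow> root_component (G r) R2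
    \<Longrightarrow> R1 = R2"
  shows "\<exists>p. \<forall>q. causal_distance G t p q \<le> enat (CARD('a) * (CARD('a) - 2) + 1)"
proof -
  define n where "n = CARD('a)"
  define k where "k = n * (n - 2) + 1"
  define x where "x i = (SOME x. \<forall>q. (x, q) \<in> (G (t + i))\<^sup>*)" for i
  have source: "\<forall>i<k. \<forall>q. (x i, q) \<in> (G (t + i))\<^sup>*"
  proof (intro allI impI)
    fix i q
    have "\<exists>y. \<forall>q. (y, q) \<in> (G (t + i))\<^sup>*"
      by (rule unique_root_component_imp_source, rule unique_root[of "t + i"]) simp_all
    then show "(x i, q) \<in> (G (t + i))\<^sup>*"
      unfolding x_def by (rule someI2_ex) blast
  qed
  obtain p where pigeon: "k \<le> card (x -` {p} \<inter> {..<k}) * n"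
    using pigeonhole_card[of x "{..<k}" UNIV] unfolding n_def by auto
  have "n - 1 \<le> card (x -` {p} \<inter> {..<k})"
  proof (rule ccontr)
    assume "\<not> n - 1 \<le> card (x -` {p} \<inter> {..<k})"
    then have "card (x -` {p} \<inter> {..<k}) * n \<le> (n - 2) * n"
      by (intro mult_right_mono) auto
    with pigeon have "k \<le> (n - 2) * n" by (rule le_trans)
    then show False unfolding k_def by (simp add: mult.commute)
  qed
  then have "n \<le> card (influence_set G t p k)"
    using card_influence_set_ge[OF source, of p] unfolding n_def by simp
  moreover have "card (influence_set G t p k) \<le> n"
    unfolding n_def by (rule card_mono) auto
  ultimately have "influence_set G t p k = UNIV"
    unfolding n_def by (simp add: card_eq_UNIV_imp_eq_UNIV)
  then have "\<forall>q. causal_distance G t p q \<le> enat k"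
    using causal_distance_le_if_in_influence_set[of _ G t p k] by (simp add: k_def)
  then show ?thesis unfolding k_def n_def by blast
qed

definition out_star :: "'a \<Rightarrow> ('a \<times> 'a) set" where
  "out_star a = {(u, v). u = a \<and> v \<noteq> a}"

lemma simple_digraph_out_star: "simple_digraph (out_star a)"
  unfolding simple_digraph_def out_star_def by auto

lemma rtrancl_out_star_into_centre: "(q, a) \<in> (out_star a)\<^sup>* \<Longrightarrow> q = a"
  by (erule rtranclE) (auto simp: out_star_def)

lemma root_component_out_star_iff: "root_component (out_star a) R \<longleftrightarrow> R = {a}"
proof
  assume "root_component (out_star a) R"
  then have scc: "strongly_connected_component (out_star a) R"
    and closed: "\<And>u v. (u, v) \<in> out_star a \<Longrightarrow> v \<in> R \<Longrightarrow> u \<in> R"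
    unfolding root_component_def by blast+
  then obtain r where "r \<in> R"
    unfolding strongly_connected_component_def by blast
  then have "a \<in> R" using closed[of a r] by (cases "r = a") (simp_all add: out_star_def)
  moreover have "v = a" if "v \<in> R" for v
  proof (rule rtrancl_out_star_into_centre)
    show "(v, a) \<in> (out_star a)\<^sup>*"
      using scc that \<open>a \<in> R\<close> unfolding strongly_connected_component_def by blast
  qed
  ultimately show "R = {a}" by blast
next
  assume R: "R = {a}"
  have "strongly_connected_component (out_star a) R"
    unfolding strongly_connected_component_def R using rtrancl_out_star_into_centre by auto
  moreover have "(q, a) \<notin> out_star a" for q by (simp add: out_star_def)
  ultimately show "root_component (out_star a) R"
    unfolding root_component_def R by blast
qed

lemma causal_chain_out_star_from_leaf:
  assumes "causal_chain (\<lambda>_. out_star a) t k q p" "q \<noteq> a"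
  shows "p = q"
proof -
  obtain ps where ps: "ps 0 = q" "ps k = p"
    "\<forall>i<k. causally_influences (\<lambda>_. out_star a) (t + i) (ps i) (ps (Suc i))"
    using assms(1) unfolding causal_chain_def by blast
  have "i \<le> k \<Longrightarrow> ps i = q" for i
  proof (induction i)
    case (Suc i)
    then have "ps i = q" by simp
    moreover have "causally_influences (\<lambda>_. out_star a) (t + i) (ps i) (ps (Suc i))"
      using ps(3) Suc.prems Suc_le_lessD by blast
    ultimately show ?case using assms(2) by (auto simp: causally_influences_def out_star_def)
  qed (simp add: ps(1))
  with ps(2) show ?thesis by simp
qed

theorem ex_rooted_graphs_no_process_influenced_by_all:
  assumes "CARD('a::finite) > 2"
  shows "\<exists>G :: nat \<Rightarrow> ('a \<times> 'a) set.
           (\<forall>r. simple_digraph (G r) \<and> (\<exists>!R. root_component (G r) R)) \<and>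
           \<not> (\<exists>p. \<forall>q. causal_distance G t q p < \<infinity>)"
proof -
  fix a :: 'a
  let ?G = "\<lambda>_ :: nat. out_star a"
  have "\<forall>r. simple_digraph (?G r) \<and> (\<exists>!R. root_component (?G r) R)"
    by (simp add: simple_digraph_out_star root_component_out_star_iff)
  moreover have "\<not> (\<exists>p. \<forall>q. causal_distance ?G t q p < \<infinity>)"
  proof
    assume "\<exists>p. \<forall>q. causal_distance ?G t q p < \<infinity>"
    then obtain p where p: "\<forall>q. causal_distance ?G t q p < \<infinity>" by blast
    have "card {a, p} \<le> 2" by (simp add: card_insert_if)
    with assms have "{a, p} \<noteq> UNIV" by auto
    then obtain q where "q \<noteq> a" "q \<noteq> p" by auto
    then have "causal_distance ?G t q p = \<infinity>"
      unfolding causal_distance_def using causal_chain_out_star_from_leaf[of a t _ q p] by auto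
    with p[rule_format, of q] show False by simp
  qed
  ultimately show ?thesis by (intro exI[of _ ?G] conjI)
qed

theorem lemma14:
  assumes "CARD('a) \<ge> 2"
  shows "(\<forall>G :: nat \<Rightarrow> ('a::finite \<times> 'a) set.
            (\<forall>r>0. simple_digraph (G r) \<and>
                   (\<forall>R1 R2. root_component (G r) R1 \<and> root_component (G r) R2 \<longrightarrow> R1 = R2))
            \<longrightarrow> (\<exists>p. \<forall>q. causal_distance G 1 p q < \<infinity> \<and>
                         causal_distance G 1 p q \<le> enat (CARD('a) * (CARD('a) - 2) + 1)))
       \<and> (CARD('a) > 2 \<longrightarrow>
            (\<exists>G :: nat \<Rightarrow> ('a \<times> 'a) set.
               (\<forall>r>0. simple_digraph (G r) \<and> (\<exists>!R. root_component (G r) R)) \<and>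
               \<not> (\<exists>p. \<forall>q. causal_distance G 1 q p < \<infinity>)))"
proof (intro conjI allI impI)
  fix G :: "nat \<Rightarrow> ('a \<times> 'a) set"
  assume hyp: "\<forall>r>0. simple_digraph (G r) \<and>
            (\<forall>R1 R2. root_component (G r) R1 \<and> root_component (G r) R2 \<longrightarrow> R1 = R2)"
  have "R1 = R2" if "1 \<le> r" "root_component (G r) R1" "root_component (G r) R2" for r R1 R2
  proof -
    from \<open>1 \<le> r\<close> have "0 < r" by simp
    with hyp that(2,3) show ?thesis by blast
  qed
  then obtain p where bound: "\<And>q. causal_distance G 1 p q \<le> enat (CARD('a) * (CARD('a) - 2) + 1)"
    using ex_process_influencing_all[of 1 G] by blast
  have "causal_distance G 1 p q < \<infinity>" for q
    using bound[of q] by (cases "causal_distance G 1 p q") simp_all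
  with bound show "\<exists>p. \<forall>q. causal_distance G 1 p q < \<infinity> \<and>
               causal_distance G 1 p q \<le> enat (CARD('a) * (CARD('a) - 2) + 1)"
    by blast
next
  assume "CARD('a) > 2"
  then obtain G :: "nat \<Rightarrow> ('a \<times> 'a) set"
    where "\<forall>r. simple_digraph (G r) \<and> (\<exists>!R. root_component (G r) R)"
      and "\<not> (\<exists>p. \<forall>q. causal_distance G 1 q p < \<infinity>)"
    using ex_rooted_graphs_no_process_influenced_by_all by blast
  then show "\<exists>G :: nat \<Rightarrow> ('a \<times> 'a) set.
               (\<forall>r>0. simple_digraph (G r) \<and> (\<exists>!R. root_component (G r) R)) \<and>
               \<not> (\<exists>p. \<forall>q. causal_distance G 1 q p < \<infinity>)"
    by blast
qed

end
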